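(* Let $t$ be a positive integer and let $M$ be a $t$-spike with associated partition $(A_1,\ldots,A_r)$. Then, for every partition $(J,K)$ of $\{1,\dots,r\}$ with $|J| \le |K|$, $$\lambda\left(\bigcup_{j \in J} A_j\right) = \begin{cases} 2|J| & \text{if } |J| < t,\\ 2t-2 & \text{if } |J| \ge t.\end{cases}$$
   Context: For a positive integer $t$, a matroid $M$ is a $t$-spike of order $r$ (where $r\ge t$) if there is a partition $(A_1,\ldots,A_r)$ of $E(M)$ into 2-element sets, called the associated partition, such that, for every $t$-element subset $J\subseteq\{1,\dots,r\}$, the set $\bigcup_{j\in J}A_j$ is both a circuit and a cocircuit of $M$. The connectivity function of a matroid $M$ with ground set $E$ is $\lambda(X) = r(X) + r(E-X) - r(M)$ for $X\subseteq E$. *)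

theory Defs
  imports Main
begin

definition matroid :: "'a set \<Rightarrow> ('a set \<Rightarrow> bool) \<Rightarrow> bool" where
  "matroid E indep \<longleftrightarrow>
     finite E \<and>
     indep {} \<and>
     (\<forall>X. indep X \<longrightarrow> X \<subseteq> E) \<and>
     (\<forall>X Y. indep Y \<and> X \<subseteq> Y \<longrightarrow> indep X) \<and>
     (\<forall>X Y. indep X \<and> indep Y \<and> card X < card Y \<longrightarrow>
        (\<exists>e\<in>Y - X. indep (insert e X)))"

definition mrank :: "('a set \<Rightarrow> bool) \<Rightarrow> 'a set \<Rightarrow> nat" where
  "mrank indep X = Max {card Y | Y. Y \<subseteq> X \<and> indep Y}"

definition basis :: "('a set \<Rightarrow> bool) \<Rightarrow> 'a set \<Rightarrow> bool" where
  "basis indep B \<longleftrightarrow> indep B \<and> (\<forall>X. indep X \<and> B \<subseteq> X \<longrightarrow> X = B)"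

definition circuit :: "'a set \<Rightarrow> ('a set \<Rightarrow> bool) \<Rightarrow> 'a set \<Rightarrow> bool" where
  "circuit E indep C \<longleftrightarrow> C \<subseteq> E \<and> \<not> indep C \<and> (\<forall>x\<in>C. indep (C - {x}))"

definition dual_indep :: "'a set \<Rightarrow> ('a set \<Rightarrow> bool) \<Rightarrow> 'a set \<Rightarrow> bool" where
  "dual_indep E indep X \<longleftrightarrow> X \<subseteq> E \<and> (\<exists>B. basis indep B \<and> X \<inter> B = {})"

definition cocircuit :: "'a set \<Rightarrow> ('a set \<Rightarrow> bool) \<Rightarrow> 'a set \<Rightarrow> bool" where
  "cocircuit E indep C \<longleftrightarrow> circuit E (dual_indep E indep) C"

definition conn :: "'a set \<Rightarrow> ('a set \<Rightarrow> bool) \<Rightarrow> 'a set \<Rightarrow> int" where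
  "conn E indep X = int (mrank indep X) + int (mrank indep (E - X)) - int (mrank indep E)"

definition spike :: "nat \<Rightarrow> nat \<Rightarrow> 'a set \<Rightarrow> ('a set \<Rightarrow> bool) \<Rightarrow> (nat \<Rightarrow> 'a set) \<Rightarrow> bool" where
  "spike t r E indep A \<longleftrightarrow>
     matroid E indep \<and> r \<ge> t \<and>
     (\<forall>i\<in>{1..r}. card (A i) = 2) \<and>
     (\<forall>i\<in>{1..r}. \<forall>j\<in>{1..r}. i \<noteq> j \<longrightarrow> A i \<inter> A j = {}) \<and>
     (\<Union>i\<in>{1..r}. A i) = E \<and>
     (\<forall>J. J \<subseteq> {1..r} \<and> card J = t \<longrightarrow>
        circuit E indep (\<Union>j\<in>J. A j) \<and> cocircuit E indep (\<Union>j\<in>J. A j))"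

end

(*
  Call the A_i legs. For t <= |S| <= r + 1 - t, the legs indexed by S span a set
  of rank |S| + t - 1.
  A set of t legs is a circuit of size 2t, hence of rank 2t - 1, and every further leg
  raises the rank by exactly one: by at most one, because one of its points closes a
  circuit with its other point and t - 1 legs already present; by at least one, because
  with t - 1 legs outside the current set it forms a cocircuit disjoint from that set.
  So r(M) = r when 2t <= r, and lambda = (|J| + t - 1) + (|K| + t - 1) - r = 2t - 2.
  If |J| < t, the legs of J lie in a circuit-cocircuit C of t legs and miss a point x
  of C: they are independent, and their complement contains E - (C - x), which spans M.
*)
theory Submission imports Defs begin

locale indep_matroid =
  fixes E :: "'a set" and indep :: "'a set \<Rightarrow> bool"
  assumes matroid: "matroid E indep"
begin

lemma finite_ground: "finite E"
  using matroid by (simp add: matroid_def)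

lemma indep_empty: "indep {}"
  using matroid by (simp add: matroid_def)

lemma indep_subset_ground: "indep X \<Longrightarrow> X \<subseteq> E"
  using matroid by (simp add: matroid_def)

lemma indep_subset: "indep Y \<Longrightarrow> X \<subseteq> Y \<Longrightarrow> indep X"
  using matroid unfolding matroid_def by blast

lemma indep_augment:
  "indep X \<Longrightarrow> indep Y \<Longrightarrow> card X < card Y \<Longrightarrow> \<exists>e\<in>Y - X. indep (insert e X)"
  using matroid by (simp add: matroid_def)

lemma indep_finite: "indep X \<Longrightarrow> finite X"
  using finite_ground indep_subset_ground finite_subset by blast

lemma finite_indep_cards: "finite {card Y | Y. Y \<subseteq> X \<and> indep Y}"
proof (rule finite_subset)
  show "{card Y | Y. Y \<subseteq> X \<and> indep Y} \<subseteq> card ` Pow E"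
    using indep_subset_ground by blast
qed (use finite_ground in simp)

lemma indep_card_le_rank: "indep Y \<Longrightarrow> Y \<subseteq> X \<Longrightarrow> card Y \<le> mrank indep X"
  unfolding mrank_def using finite_indep_cards by (intro Max_ge) auto

lemma rank_attained:
  obtains Y where "Y \<subseteq> X" "indep Y" "card Y = mrank indep X"
proof -
  have "{card Y | Y. Y \<subseteq> X \<and> indep Y} \<noteq> {}"
    using indep_empty by blast
  then have "mrank indep X \<in> {card Y | Y. Y \<subseteq> X \<and> indep Y}"
    unfolding mrank_def using finite_indep_cards by (rule Max_in[rotated])
  then show thesis using that by auto
qed

lemma rank_mono: "X \<subseteq> Z \<Longrightarrow> mrank indep X \<le> mrank indep Z"
  by (metis rank_attained indep_card_le_rank order_trans)

lemma rank_indep: "indep X \<Longrightarrow> mrank indep X = card X"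
  by (metis rank_attained indep_card_le_rank indep_finite card_mono le_antisym order_refl)

lemma rank_insert_le: "mrank indep (insert e X) \<le> mrank indep X + 1"
proof -
  obtain Y where Y: "Y \<subseteq> insert e X" "indep Y" "card Y = mrank indep (insert e X)"
    using rank_attained .
  have "card (Y - {e}) \<le> mrank indep X"
    using Y by (intro indep_card_le_rank) (auto intro: indep_subset)
  moreover have "card Y \<le> card (Y - {e}) + 1"
    using indep_finite[OF Y(2)] by (cases "e \<in> Y") simp_all
  ultimately show ?thesis using Y(3) by linarith
qed

lemma indep_extend_to_rank:
  "indep I \<Longrightarrow> I \<subseteq> X \<Longrightarrow> \<exists>W. I \<subseteq> W \<and> W \<subseteq> X \<and> indep W \<and> card W = mrank indep X"
proof (induction "mrank indep X - card I" arbitrary: I rule: less_induct)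
  case less
  obtain Y where Y: "Y \<subseteq> X" "indep Y" "card Y = mrank indep X"
    using rank_attained .
  have le: "card I \<le> mrank indep X"
    using indep_card_le_rank less.prems .
  show ?case
  proof (cases "card I = mrank indep X")
    case True
    with less.prems show ?thesis by blast
  next
    case False
    then obtain e where e: "e \<in> Y - I" "indep (insert e I)"
      using indep_augment[OF less.prems(1) Y(2)] le Y(3) by auto
    have "card (insert e I) = card I + 1"
      using e indep_finite[OF less.prems(1)] by simp
    then have "\<exists>W. insert e I \<subseteq> W \<and> W \<subseteq> X \<and> indep W \<and> card W = mrank indep X"
      using False le e Y less.prems by (intro less.hyps) auto
    then show ?thesis by blast
  qed
qed

lemma rank_insert_dependent:
  assumes "indep I" "I \<subseteq> X" "\<not> indep (insert e I)"
  shows "mrank indep (insert e X) = mrank indep X"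
proof -
  obtain W where W: "I \<subseteq> W" "W \<subseteq> insert e X" "indep W" "card W = mrank indep (insert e X)"
    using indep_extend_to_rank[OF assms(1)] assms(2) by (meson subset_insertI2)
  have "e \<notin> W"
    using W assms(3) indep_subset by blast
  then have "mrank indep (insert e X) \<le> mrank indep X"
    using W indep_card_le_rank by (metis subset_insert)
  then show ?thesis
    using rank_mono[of X "insert e X"] by (simp add: subset_insertI)
qed

lemma rank_insert_eq_mono:
  assumes "mrank indep (insert e X) = mrank indep X" "X \<subseteq> Z"
  shows "mrank indep (insert e Z) = mrank indep Z"
proof -
  obtain I where I: "I \<subseteq> X" "indep I" "card I = mrank indep X"
    using rank_attained .
  consider "e \<in> I" | "e \<notin> I" "indep (insert e I)" | "\<not> indep (insert e I)"
    by blast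
  then show ?thesis
  proof cases
    case 1
    then show ?thesis using I assms(2) by (simp add: insert_absorb subset_iff)
  next
    case 2
    then have "card (insert e I) \<le> mrank indep (insert e X)"
      using I(1) by (intro indep_card_le_rank) auto
    then show ?thesis
      using 2 I assms(1) indep_finite by simp
  next
    case 3
    then show ?thesis
      using I assms(2) by (intro rank_insert_dependent) auto
  qed
qed

lemma basis_card_eq_rank:
  assumes "basis indep B"
  shows "card B = mrank indep E"
proof -
  have B: "indep B"
    using assms by (simp add: basis_def)
  obtain Y where Y: "Y \<subseteq> E" "indep Y" "card Y = mrank indep E"
    using rank_attained .
  have "\<not> card B < card Y"
  proof
    assume "card B < card Y"
    then obtain e where "e \<in> Y - B" "indep (insert e B)"
      using indep_augment[OF B Y(2)] by blast
    then show False
      using assms unfolding basis_def by blast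
  qed
  then show ?thesis
    using Y(3) indep_card_le_rank[OF B indep_subset_ground[OF B]] by simp
qed

lemma basisI_card_eq_rank:
  assumes "indep I" "card I = mrank indep E"
  shows "basis indep I"
  unfolding basis_def
proof (intro conjI allI impI)
  fix X assume X: "indep X \<and> I \<subseteq> X"
  then have "card X \<le> card I"
    using indep_card_le_rank indep_subset_ground assms(2) by metis
  then show "X = I"
    using X indep_finite card_seteq by blast
qed (fact assms(1))

lemma rank_circuit:
  assumes "circuit E indep C"
  shows "mrank indep C + 1 = card C"
proof -
  have C: "C \<subseteq> E" "\<not> indep C" "\<And>x. x \<in> C \<Longrightarrow> indep (C - {x})"
    using assms unfolding circuit_def by auto
  have fin: "finite C"
    using C(1) finite_ground finite_subset by blast
  obtain x where x: "x \<in> C"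
    using C(2) indep_empty by (metis ex_in_conv)
  have "card (C - {x}) \<le> mrank indep C"
    using C(3)[OF x] by (intro indep_card_le_rank) auto
  then have "card C \<le> mrank indep C + 1"
    using x fin by simp
  moreover obtain Y where Y: "Y \<subseteq> C" "indep Y" "card Y = mrank indep C"
    using rank_attained .
  then have "card Y < card C"
    using C(2) fin by (metis psubsetI psubset_card_mono)
  ultimately show ?thesis using Y(3) by simp
qed

lemma rank_insert_circuit:
  assumes "circuit E indep C" "e \<in> C" "C - {e} \<subseteq> X"
  shows "mrank indep (insert e X) = mrank indep X"
proof (rule rank_insert_dependent)
  show "indep (C - {e})" "\<not> indep (insert e (C - {e}))"
    using assms unfolding circuit_def by (auto simp: insert_absorb)
qed (fact assms(3))

lemma rank_cocircuit_complement_less: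
  assumes "cocircuit E indep D"
  shows "mrank indep (E - D) < mrank indep E"
proof (rule ccontr)
  assume "\<not> ?thesis"
  then have eq: "mrank indep (E - D) = mrank indep E"
    using rank_mono[of "E - D" E] by auto
  obtain I where I: "I \<subseteq> E - D" "indep I" "card I = mrank indep (E - D)"
    using rank_attained .
  then have "basis indep I"
    using eq by (intro basisI_card_eq_rank) auto
  then have "dual_indep E indep D"
    using I assms unfolding dual_indep_def cocircuit_def circuit_def by blast
  then show False
    using assms unfolding cocircuit_def circuit_def by blast
qed

lemma rank_cocircuit_spanning:
  assumes "cocircuit E indep D" "x \<in> D" "X \<subseteq> D - {x}"
  shows "mrank indep (E - X) = mrank indep E"
proof -
  obtain B where B: "basis indep B" "(D - {x}) \<inter> B = {}"
    using assms(1,2) unfolding cocircuit_def circuit_def dual_indep_def by blast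
  then have "indep B" "B \<subseteq> E - X"
    using indep_subset_ground assms(3) unfolding basis_def by blast+
  then have "mrank indep E \<le> mrank indep (E - X)"
    using indep_card_le_rank basis_card_eq_rank[OF B(1)] by metis
  then show ?thesis
    using rank_mono[of "E - X" E] by auto
qed

lemma rank_insert_cocircuit_complement:
  assumes "cocircuit E indep D" "x \<in> D"
  shows "mrank indep (insert x (E - D)) = mrank indep E"
proof -
  have "D \<subseteq> E"
    using assms(1) unfolding cocircuit_def circuit_def by blast
  then have "E - (D - {x}) = insert x (E - D)"
    using assms(2) by blast
  then show ?thesis
    using rank_cocircuit_spanning[OF assms, of "D - {x}"] by simp
qed

lemma rank_cocircuit_complement:
  assumes "cocircuit E indep D" "x \<in> D"
  shows "mrank indep E = mrank indep (E - D) + 1"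
  using rank_insert_cocircuit_complement[OF assms] rank_insert_le[of x "E - D"]
    rank_cocircuit_complement_less[OF assms(1)] by linarith

lemma rank_insert_cocircuit:
  assumes "cocircuit E indep D" "x \<in> D" "X \<subseteq> E - D"
  shows "mrank indep (insert x X) = mrank indep X + 1"
proof -
  have "mrank indep (insert x (E - D)) \<noteq> mrank indep (E - D)"
    using rank_insert_cocircuit_complement[OF assms(1,2)] rank_cocircuit_complement[OF assms(1,2)]
    by simp
  then have "mrank indep (insert x X) \<noteq> mrank indep X"
    using rank_insert_eq_mono assms(3) by blast
  then show ?thesis
    using rank_mono[OF subset_insertI[of X x]] rank_insert_le[of x X] by linarith
qed

end

locale spike_matroid =
  fixes t r :: nat and E :: "'a set" and indep :: "'a set \<Rightarrow> bool" and A :: "nat \<Rightarrow> 'a set"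
  assumes spike: "spike t r E indep A" and t_pos: "0 < t"
begin

sublocale indep_matroid E indep
  using spike by unfold_locales (simp add: spike_def)

abbreviation legs :: "nat set \<Rightarrow> 'a set" where
  "legs S \<equiv> \<Union>j\<in>S. A j"

lemma t_le_r: "t \<le> r"
  using spike by (simp add: spike_def)

lemma finite_indices: "S \<subseteq> {1..r} \<Longrightarrow> finite S"
  using finite_subset by blast

lemma card_complement_indices: "S \<subseteq> {1..r} \<Longrightarrow> card ({1..r} - S) = r - card S"
  using finite_indices by (simp add: card_Diff_subset)

lemma card_leg: "i \<in> {1..r} \<Longrightarrow> card (A i) = 2"
  using spike by (simp add: spike_def)

lemma legs_disjoint: "i \<in> {1..r} \<Longrightarrow> j \<in> {1..r} \<Longrightarrow> i \<noteq> j \<Longrightarrow> A i \<inter> A j = {}"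
  using spike by (simp add: spike_def)

lemma legs_ground: "legs {1..r} = E"
  using spike by (simp add: spike_def)

lemma circuit_legs: "S \<subseteq> {1..r} \<Longrightarrow> card S = t \<Longrightarrow> circuit E indep (legs S)"
  using spike by (simp add: spike_def)

lemma cocircuit_legs: "S \<subseteq> {1..r} \<Longrightarrow> card S = t \<Longrightarrow> cocircuit E indep (legs S)"
  using spike by (simp add: spike_def)

lemma card_legs:
  assumes "S \<subseteq> {1..r}"
  shows "card (legs S) = 2 * card S"
proof -
  have "finite S"
    using finite_indices[OF assms] .
  moreover have "\<forall>i\<in>S. finite (A i)"
    using assms card_leg by (metis card.infinite subsetD zero_neq_numeral)
  moreover have "\<forall>i\<in>S. \<forall>j\<in>S. i \<noteq> j \<longrightarrow> A i \<inter> A j = {}"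
    using assms legs_disjoint by blast
  ultimately have "card (legs S) = (\<Sum>i\<in>S. card (A i))"
    by (rule card_UN_disjoint)
  also have "\<dots> = 2 * card S"
    using assms card_leg by (simp add: subset_iff)
  finally show ?thesis .
qed

lemma legs_Int_legs:
  assumes "S \<subseteq> {1..r}" "T \<subseteq> {1..r}" "S \<inter> T = {}"
  shows "legs S \<inter> legs T = {}"
  using assms legs_disjoint by blast

lemma legs_complement:
  assumes "S \<subseteq> {1..r}"
  shows "E - legs S = legs ({1..r} - S)"
  using legs_ground legs_Int_legs[OF assms, of "{1..r} - S"] by blast

lemma leg_pairE:
  assumes "j \<in> {1..r}"
  obtains a b where "A j = {a, b}" "a \<noteq> b"
  using card_leg[OF assms] by (meson card_2_iff)

lemma rank_insert_leg_le:
  assumes S: "S \<subseteq> {1..r}" and j: "j \<in> {1..r}" "j \<notin> S" and card_S: "t - 1 \<le> card S"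
  shows "mrank indep (legs (insert j S)) \<le> mrank indep (legs S) + 1"
proof -
  obtain L where L: "L \<subseteq> S" "card L = t - 1"
    using card_S obtain_subset_with_card_n by metis
  have "finite L" "j \<notin> L"
    using L S j finite_indices by blast+
  then have "card (insert j L) = t"
    using L(2) t_pos by simp
  then have C: "circuit E indep (legs (insert j L))"
    using L S j by (intro circuit_legs) auto
  obtain a b where ab: "A j = {a, b}" "a \<noteq> b"
    using leg_pairE[OF j(1)] .
  have "b \<notin> legs L"
    using legs_Int_legs[of "{j}" L] L S j ab by auto
  then have "legs (insert j L) - {b} \<subseteq> insert a (legs S)"
    using ab L by auto
  then have "mrank indep (insert b (insert a (legs S))) = mrank indep (insert a (legs S))"
    using C ab by (intro rank_insert_circuit) auto
  moreover have "legs (insert j S) = insert b (insert a (legs S))"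
    using ab by auto
  ultimately show ?thesis
    using rank_insert_le[of a "legs S"] by simp
qed

lemma rank_insert_leg_ge:
  assumes S: "S \<subseteq> {1..r}" and j: "j \<in> {1..r}" "j \<notin> S"
    and card_compl: "t - 1 \<le> card ({1..r} - insert j S)"
  shows "mrank indep (legs S) + 1 \<le> mrank indep (legs (insert j S))"
proof -
  obtain L where L: "L \<subseteq> {1..r} - insert j S" "card L = t - 1"
    using card_compl obtain_subset_with_card_n by metis
  have "finite L" "j \<notin> L"
    using L finite_indices by blast+
  then have "card (insert j L) = t"
    using L(2) t_pos by simp
  then have D: "cocircuit E indep (legs (insert j L))"
    using L j by (intro cocircuit_legs) auto
  obtain a b where ab: "A j = {a, b}"
    using leg_pairE[OF j(1)] .
  have "legs S \<subseteq> E - legs (insert j L)"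
    using legs_complement[of "insert j L"] L S j by auto
  then have "mrank indep (insert a (legs S)) = mrank indep (legs S) + 1"
    using D ab by (intro rank_insert_cocircuit) auto
  moreover have "insert a (legs S) \<subseteq> legs (insert j S)"
    using ab by auto
  ultimately show ?thesis
    using rank_mono by metis
qed

lemma rank_legs:
  "S \<subseteq> {1..r} \<Longrightarrow> t \<le> card S \<Longrightarrow> card S + t \<le> r + 1 \<Longrightarrow>
    mrank indep (legs S) = card S + t - 1"
proof (induction "card S" arbitrary: S rule: less_induct)
  case less
  have fin: "finite S"
    using finite_indices[OF less.prems(1)] .
  show ?case
  proof (cases "card S = t")
    case True
    then show ?thesis
      using rank_circuit[OF circuit_legs[OF less.prems(1)]] card_legs[OF less.prems(1)] by simp
  next
    case False
    then obtain j where j: "j \<in> S"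
      using less.prems(2) t_pos by fastforce
    define S' where "S' = S - {j}"
    have S: "S = insert j S'" "j \<notin> S'" "S' \<subseteq> {1..r}" "card S' = card S - 1"
      using j fin less.prems(1) unfolding S'_def by auto
    have j_r: "j \<in> {1..r}"
      using j less.prems(1) by blast
    have "t - 1 \<le> card S'"
      using S(4) less.prems(2) by simp
    then have "mrank indep (legs S) \<le> mrank indep (legs S') + 1"
      using rank_insert_leg_le[OF S(3) j_r S(2)] S(1) by simp
    moreover have "t - 1 \<le> card ({1..r} - insert j S')"
      using card_complement_indices[OF less.prems(1)] less.prems(3) S(1) by simp
    then have "mrank indep (legs S') + 1 \<le> mrank indep (legs S)"
      using rank_insert_leg_ge[OF S(3) j_r S(2)] S(1) by simp
    ultimately have "mrank indep (legs S) = mrank indep (legs S') + 1"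
      by simp
    moreover have "mrank indep (legs S') = card S' + t - 1"
      using less.hyps[of S'] S less.prems False by simp
    ultimately show ?thesis
      using S(4) False less.prems(2) t_pos by simp
  qed
qed

lemma rank_ground:
  assumes "2 * t \<le> r"
  shows "mrank indep E = r"
proof -
  obtain S where S: "S \<subseteq> {1..r}" "card S = t"
    using obtain_subset_with_card_n[of t "{1..r}"] assms by auto
  then obtain j where j: "j \<in> S"
    using t_pos by fastforce
  then obtain a b where "A j = {a, b}"
    using S leg_pairE by blast
  then have "mrank indep E = mrank indep (E - legs S) + 1"
    using j cocircuit_legs[OF S] by (intro rank_cocircuit_complement) auto
  moreover have "card ({1..r} - S) = r - t"
    using S card_complement_indices by simp
  ultimately show ?thesis
    using rank_legs[of "{1..r} - S"] legs_complement[OF S(1)] assms t_pos by simp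
qed

lemma obtain_card_t_superset:
  assumes "S \<subseteq> {1..r}" "card S < t"
  obtains T j where "S \<subseteq> T" "T \<subseteq> {1..r}" "card T = t" "j \<in> T - S"
proof -
  have "t - card S \<le> card ({1..r} - S)"
    using card_complement_indices[OF assms(1)] t_le_r by simp
  then obtain U where U: "U \<subseteq> {1..r} - S" "card U = t - card S"
    by (meson obtain_subset_with_card_n)
  then obtain j where "j \<in> U"
    using assms(2) by fastforce
  moreover have "card (S \<union> U) = t"
    using U assms finite_indices by (subst card_Un_disjoint) auto
  ultimately show thesis
    using that[of "S \<union> U" j] U assms(1) by blast
qed

lemma conn_legs_small:
  assumes S: "S \<subseteq> {1..r}" and card_S: "card S < t"
  shows "conn E indep (legs S) = 2 * int (card S)"
proof -
  obtain T j where T: "S \<subseteq> T" "T \<subseteq> {1..r}" "card T = t" "j \<in> T - S"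
    using obtain_card_t_superset[OF assms] .
  have j_r: "j \<in> {1..r}"
    using T by blast
  obtain x y where "A j = {x, y}"
    using leg_pairE[OF j_r] .
  moreover have "legs S \<inter> A j = {}"
    using legs_Int_legs[of S "{j}"] S T j_r by auto
  ultimately have x: "x \<in> legs T" "legs S \<subseteq> legs T - {x}"
    using T by auto
  have "indep (legs T - {x})"
    using circuit_legs[OF T(2,3)] x(1) unfolding circuit_def by blast
  then have "mrank indep (legs S) = 2 * card S"
    using x(2) indep_subset rank_indep card_legs[OF S] by metis
  moreover have "mrank indep (E - legs S) = mrank indep E"
    using cocircuit_legs[OF T(2,3)] x by (rule rank_cocircuit_spanning)
  ultimately show ?thesis
    unfolding conn_def by simp
qed

lemma conn_legs_large:
  assumes S: "S \<subseteq> {1..r}" and "t \<le> card S" "card S \<le> card ({1..r} - S)"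
  shows "conn E indep (legs S) = 2 * int t - 2"
proof -
  have card_compl: "card ({1..r} - S) = r - card S"
    using card_complement_indices[OF S] .
  have "mrank indep (legs S) = card S + t - 1"
    using rank_legs[OF S] assms card_compl by simp
  moreover have "mrank indep (E - legs S) = (r - card S) + t - 1"
    using rank_legs[of "{1..r} - S"] legs_complement[OF S] assms card_compl by simp
  moreover have "mrank indep E = r"
    using rank_ground assms card_compl by simp
  ultimately show ?thesis
    unfolding conn_def using assms card_compl t_pos by simp
qed

end

theorem lemma6p4:
  fixes t r :: nat and E :: "'a set" and indep :: "'a set \<Rightarrow> bool"
    and A :: "nat \<Rightarrow> 'a set" and J K :: "nat set"
  assumes "t > 0"
    and "spike t r E indep A"
    and "J \<union> K = {1..r}" and "J \<inter> K = {}"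
    and "card J \<le> card K"
  shows "conn E indep (\<Union>j\<in>J. A j) =
           (if card J < t then 2 * int (card J) else 2 * int t - 2)"
proof -
  interpret spike_matroid t r E indep A
    using assms(1,2) by unfold_locales
  have J: "J \<subseteq> {1..r}" and K: "K = {1..r} - J"
    using assms(3,4) by blast+
  show ?thesis
    using conn_legs_small[OF J] conn_legs_large[OF J] assms(5) unfolding K by auto
qed

end
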